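(* Let $\langle M,\mathsf{S}\rangle$ be a sum structure, $x\in M$, and $\mathcal{A}$ a non-empty family of subsets of $M$ such that $x\,\mathsf{S}\,A$ for every $A\in\mathcal{A}$. Then $x\,\mathsf{S}\,\bigcup\mathcal{A}$.
   Context: For a set $M$ and a relation $\mathsf{S}\subseteq M\times\mathcal{P}(M)$ define: $x\sqsubseteq_{\mathsf{S}} y$ iff there is $X\subseteq M$ with $y\,\mathsf{S}\,X$ and $x\in X$; $\mathrm{I}(x)=\{y\in M\mid y\sqsubseteq_{\mathsf{S}} x\}$ and for $A\subseteq M$, $\mathrm{I}(A)=\bigcup_{a\in A}\mathrm{I}(a)$; $x$ s-overlaps $y$ iff there are $X,Y\subseteq M$ with $x\,\mathsf{S}\,X$, $y\,\mathsf{S}\,Y$, $X\cap Y\neq\emptyset$; a set $A\subseteq M$ is pre-dense in $B\subseteq M$ iff for every $b\in B$ there is $a\in A$ such that $a$ s-overlaps $b$. A sum structure is a pair $\langle M,\mathsf{S}\rangle$ satisfying: (S1) for every non-empty $X\subseteq M$ there is $x\in M$ with $x\,\mathsf{S}\,X$; (S2) $x\,\mathsf{S}\,X\wedge y\,\mathsf{S}\,X\to x=y$; (S3) $x\,\mathsf{S}\,X\wedge y\,\mathsf{S}\,Y\wedge x\in Y\to y\,\mathsf{S}\,(X\cup Y)$; (S4) if $x\,\mathsf{S}\,X$, $x\,\mathsf{S}\,Y$ and $y\in Y$, then there are $z\in X$ and $Z,U\subseteq M$ with $z\,\mathsf{S}\,Z$, $y\,\mathsf{S}\,U$ and $Z\cap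 U\neq\emptyset$; (S5) for all $x\in M$ and $X\subseteq M$: if $X$ is pre-dense in $\mathrm{I}(x)$ then $x\,\mathsf{S}\,(\mathrm{I}(x)\cap\mathrm{I}(X))$. *)

theory Defs
  imports Main
begin

definition below :: "'a set \<Rightarrow> ('a \<Rightarrow> 'a set \<Rightarrow> bool) \<Rightarrow> 'a \<Rightarrow> 'a \<Rightarrow> bool" where
  "below M S x y \<longleftrightarrow> (\<exists>X. X \<subseteq> M \<and> S y X \<and> x \<in> X)"

definition ideal :: "'a set \<Rightarrow> ('a \<Rightarrow> 'a set \<Rightarrow> bool) \<Rightarrow> 'a \<Rightarrow> 'a set" where
  "ideal M S x = {y \<in> M. below M S y x}"

definition ideal_set :: "'a set \<Rightarrow> ('a \<Rightarrow> 'a set \<Rightarrow> bool) \<Rightarrow> 'a set \<Rightarrow> 'a set" where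
  "ideal_set M S A = (\<Union>a\<in>A. ideal M S a)"

definition s_overlaps :: "'a set \<Rightarrow> ('a \<Rightarrow> 'a set \<Rightarrow> bool) \<Rightarrow> 'a \<Rightarrow> 'a \<Rightarrow> bool" where
  "s_overlaps M S x y \<longleftrightarrow>
     (\<exists>X Y. X \<subseteq> M \<and> Y \<subseteq> M \<and> S x X \<and> S y Y \<and> X \<inter> Y \<noteq> {})"

definition pre_dense :: "'a set \<Rightarrow> ('a \<Rightarrow> 'a set \<Rightarrow> bool) \<Rightarrow> 'a set \<Rightarrow> 'a set \<Rightarrow> bool" where
  "pre_dense M S A B \<longleftrightarrow> (\<forall>b\<in>B. \<exists>a\<in>A. s_overlaps M S a b)"

definition sum_structure :: "'a set \<Rightarrow> ('a \<Rightarrow> 'a set \<Rightarrow> bool) \<Rightarrow> bool" where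
  "sum_structure M S \<longleftrightarrow>
     (\<forall>x X. S x X \<longrightarrow> x \<in> M \<and> X \<subseteq> M) \<and>
     (\<forall>X. X \<subseteq> M \<and> X \<noteq> {} \<longrightarrow> (\<exists>x\<in>M. S x X)) \<and>
     (\<forall>x y X. x \<in> M \<and> y \<in> M \<and> X \<subseteq> M \<and> S x X \<and> S y X \<longrightarrow> x = y) \<and>
     (\<forall>x y X Y. x \<in> M \<and> y \<in> M \<and> X \<subseteq> M \<and> Y \<subseteq> M \<and> S x X \<and> S y Y \<and> x \<in> Y
        \<longrightarrow> S y (X \<union> Y)) \<and>
     (\<forall>x y X Y. x \<in> M \<and> y \<in> M \<and> X \<subseteq> M \<and> Y \<subseteq> M \<and> S x X \<and> S x Y \<and> y \<in> Y
        \<longrightarrow> (\<exists>z\<in>X. \<exists>Z U. Z \<subseteq> M \<and> U \<subseteq> M \<and> S z Z \<and> S y U \<and> Z \<inter> U \<noteq> {})) \<and>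
     (\<forall>x X. x \<in> M \<and> X \<subseteq> M \<and> pre_dense M S X (ideal M S x)
        \<longrightarrow> S x (ideal M S x \<inter> ideal_set M S X))"

end

theory Submission
  imports Defs
begin

text \<open>Let U = \<Union>\<A> be non-empty and let y be a sum of U (S1). Every element of U lies below
  both x and y, so by (S3) the ideal I(U) lies inside I(x) and inside I(y). By (S4), U is
  pre-dense in I(x) (it contains some A \<in> \<A> with x S A) and in I(y), so (S5) makes both x and y
  sums of I(U), and (S2) gives x = y.\<close>

context
  fixes M :: "'a set" and S :: "'a \<Rightarrow> 'a set \<Rightarrow> bool"
  assumes sum: "sum_structure M S"
begin

lemma sum_structure_dom:
  assumes "S x X"
  shows "x \<in> M" and "X \<subseteq> M"
proof -
  have "\<forall>x X. S x X \<longrightarrow> x \<in> M \<and> X \<subseteq> M"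
    using sum unfolding sum_structure_def by (elim conjE)
  then show "x \<in> M" "X \<subseteq> M" using assms by simp_all
qed

lemma sum_structure_exists:
  assumes "X \<subseteq> M" and "X \<noteq> {}"
  shows "\<exists>x. S x X"
proof -
  have "\<forall>X. X \<subseteq> M \<and> X \<noteq> {} \<longrightarrow> (\<exists>x\<in>M. S x X)"
    using sum unfolding sum_structure_def by (elim conjE)
  then show ?thesis using assms by blast
qed

lemma sum_structure_unique:
  assumes "S x X" and "S y X"
  shows "x = y"
proof -
  have "\<forall>x y X. x \<in> M \<and> y \<in> M \<and> X \<subseteq> M \<and> S x X \<and> S y X \<longrightarrow> x = y"
    using sum unfolding sum_structure_def by (elim conjE)
  from this[rule_format, of x y X] show ?thesis
    using assms sum_structure_dom[OF assms(1)] sum_structure_dom[OF assms(2)] by simp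
qed

lemma sum_structure_union:
  assumes "S x X" and "S y Y" and "x \<in> Y"
  shows "S y (X \<union> Y)"
proof -
  have "\<forall>x y X Y. x \<in> M \<and> y \<in> M \<and> X \<subseteq> M \<and> Y \<subseteq> M \<and> S x X \<and> S y Y \<and> x \<in> Y
      \<longrightarrow> S y (X \<union> Y)"
    using sum unfolding sum_structure_def by (elim conjE)
  from this[rule_format, of x y X Y] show ?thesis
    using assms sum_structure_dom[OF assms(1)] sum_structure_dom[OF assms(2)] by simp
qed

lemma sum_structure_overlap:
  assumes "S x X" and "S x Y" and "y \<in> Y"
  shows "\<exists>z\<in>X. s_overlaps M S z y"
proof -
  have "\<forall>x y X Y. x \<in> M \<and> y \<in> M \<and> X \<subseteq> M \<and> Y \<subseteq> M \<and> S x X \<and> S x Y \<and> y \<in> Y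
      \<longrightarrow> (\<exists>z\<in>X. \<exists>Z U. Z \<subseteq> M \<and> U \<subseteq> M \<and> S z Z \<and> S y U \<and> Z \<inter> U \<noteq> {})"
    using sum unfolding sum_structure_def by (elim conjE)
  from this[rule_format, of x y X Y] show ?thesis
    using assms sum_structure_dom[OF assms(1)] sum_structure_dom[OF assms(2)]
      subsetD[OF sum_structure_dom(2)[OF assms(2)] assms(3)]
    unfolding s_overlaps_def by simp
qed

lemma sum_structure_pre_dense:
  assumes "x \<in> M" and "X \<subseteq> M" and "pre_dense M S X (ideal M S x)"
  shows "S x (ideal M S x \<inter> ideal_set M S X)"
proof -
  have "\<forall>x X. x \<in> M \<and> X \<subseteq> M \<and> pre_dense M S X (ideal M S x)
      \<longrightarrow> S x (ideal M S x \<inter> ideal_set M S X)"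
    using sum unfolding sum_structure_def by (elim conjE)
  then show ?thesis using assms by simp
qed

lemma below_trans:
  assumes "below M S w u" and "below M S u x"
  shows "below M S w x"
proof -
  obtain W where W: "S u W" "w \<in> W"
    using assms(1) unfolding below_def by blast
  obtain X where X: "S x X" "u \<in> X"
    using assms(2) unfolding below_def by blast
  have "S x (W \<union> X)" using sum_structure_union[OF W(1) X] .
  then show ?thesis
    unfolding below_def using W(2) sum_structure_dom(2) by blast
qed

lemma ideal_set_subset_ideal:
  "\<forall>u\<in>U. below M S u x \<Longrightarrow> ideal_set M S U \<subseteq> ideal M S x"
  unfolding ideal_set_def ideal_def using below_trans by blast

lemma pre_dense_ideal:
  assumes "S x X" and "X \<subseteq> U"
  shows "pre_dense M S U (ideal M S x)"
  unfolding pre_dense_def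
proof
  fix b assume "b \<in> ideal M S x"
  then obtain Y where "S x Y" "b \<in> Y"
    unfolding ideal_def below_def by blast
  then obtain z where "z \<in> X" "s_overlaps M S z b"
    using sum_structure_overlap[OF assms(1)] by blast
  then show "\<exists>a\<in>U. s_overlaps M S a b" using assms(2) by blast
qed

lemma sum_ideal_set:
  assumes "S x X" and "X \<subseteq> U" and "U \<subseteq> M" and "\<forall>u\<in>U. below M S u x"
  shows "S x (ideal_set M S U)"
proof -
  have "S x (ideal M S x \<inter> ideal_set M S U)"
    using sum_structure_pre_dense[OF sum_structure_dom(1)[OF assms(1)] assms(3)]
      pre_dense_ideal[OF assms(1,2)] .
  moreover have "ideal M S x \<inter> ideal_set M S U = ideal_set M S U"
    using ideal_set_subset_ideal[OF assms(4)] by blast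
  ultimately show ?thesis by simp
qed

end

theorem theorem3p8:
  fixes M :: "'a set" and S :: "'a \<Rightarrow> 'a set \<Rightarrow> bool"
    and x :: 'a and \<A> :: "'a set set"
  assumes "sum_structure M S"
    and "x \<in> M"
    and "\<A> \<noteq> {}"
    and "\<forall>A\<in>\<A>. A \<subseteq> M"
    and "\<forall>A\<in>\<A>. S x A"
  shows "S x (\<Union>\<A>)"
proof (cases "\<Union>\<A> = {}")
  case True
  obtain A where "A \<in> \<A>" using assms(3) by blast
  then have "A = \<Union>\<A>" using True by blast
  with \<open>A \<in> \<A>\<close> assms(5) show ?thesis by auto
next
  case False
  have UM: "\<Union>\<A> \<subseteq> M" using assms(4) by blast
  obtain y where y: "S y (\<Union>\<A>)" using sum_structure_exists[OF assms(1) UM False] by blast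
  obtain A where A: "A \<in> \<A>" using assms(3) by blast
  have below_x: "\<forall>u\<in>\<Union>\<A>. below M S u x"
    using assms(4,5) unfolding below_def by blast
  have below_y: "\<forall>u\<in>\<Union>\<A>. below M S u y"
    using UM y unfolding below_def by blast
  have "S x (ideal_set M S (\<Union>\<A>))"
    using sum_ideal_set[OF assms(1) _ _ UM below_x] A assms(5) by blast
  moreover have "S y (ideal_set M S (\<Union>\<A>))"
    using sum_ideal_set[OF assms(1) y order_refl UM below_y] .
  ultimately have "x = y" by (rule sum_structure_unique[OF assms(1)])
  with y show ?thesis by simp
qed

end
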